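(* Let $a_1,\dots,a_k$ be black-box optimization algorithms in the BBoxER framework described in the context, let $b$ be a budget divisible by $k$, and let $\mathrm{bet\text{-}and\text{-}run}(a_1,\dots,a_k)$ be the algorithm which, with seed $\omega$ split into seeds $\omega^1,\dots,\omega^k$, runs each $a_i$ independently with seed $\omega^i$ and budget $b/k$ on the same dataset, obtaining recommendations $\widehat x_1,\dots,\widehat x_k$, and outputs the $\widehat x_i$ minimizing the empirical loss $\widehat L(\widehat x_i)$. Then $$N\big(\omega,\mathrm{bet\text{-}and\text{-}run}(a_1,\dots,a_k),b\big)\le \sum_{i=1}^k N(\omega^i,a_i,b/k).$$
   Context: BBoxER framework: an initial model $m_0$ and a map $x\mapsto\mathrm{modified}(m_0,x)$; $\mathcal D$ is the class of possible datasets. An algorithm $a$, deterministic given its seed $\omega$, run with budget $b$ on $D\in\mathcal D$, at each iteration $i$ proposes $x_i$, declares finitely many $k_i$ comparison outcomes, and receives $\mathrm{choice}_i\in\{1,\dots,k_i\}$ computed by comparing the proposed models on $D$; finally it recommends $\widehat x$, a deterministic function of $(\omega,a,b,\mathrm{choice}_1,\dots,\mathrm{choice}_b)$. For an algorithm with seed $\omega$ and budget $b$, $N(\omega,a,b)$ denotes the number of distinct possible outcomes (internal states determining the output) as $D$ ranges over $\mathcal D$, i.e. $N(\omega,a,b)=\operatorname{Card}\{S(\omega,D,a,b):D\in\mathcal D\}$ with $S(\omega,D,a,b)=(\omega,\mathrm{choice}_1,\dots,\mathrm{choice}_b)$. $\widehat L$ denotes empirical loss on $D$. *)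

theory Defs
  imports Complex_Main
begin

text \<open>A black-box algorithm in the BBoxER framework, deterministic given its seed.
  Given the seed and the history of previous comparison outcomes
  (choice_1, ..., choice_{i-1}) it proposes a point x_i, declares a number k_i of
  possible comparison outcomes, and receives choice_i, computed by comparing the
  proposed models on the dataset D.\<close>

record ('w, 'd, 'x) bbalg =
  propose   :: "'w \<Rightarrow> nat list \<Rightarrow> 'x"
  nout      :: "'w \<Rightarrow> nat list \<Rightarrow> nat"
  compare   :: "'w \<Rightarrow> nat list \<Rightarrow> 'd \<Rightarrow> nat"
  recommend :: "'w \<Rightarrow> nat \<Rightarrow> nat list \<Rightarrow> 'x"

definition wf_alg :: "('w, 'd, 'x, 'z) bbalg_scheme \<Rightarrow> bool" where
  "wf_alg a \<longleftrightarrow> (\<forall>\<omega> h D. compare a \<omega> h D \<in> {1..nout a \<omega> h})"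

fun choices :: "('w, 'd, 'x, 'z) bbalg_scheme \<Rightarrow> 'w \<Rightarrow> 'd \<Rightarrow> nat \<Rightarrow> nat list" where
  "choices a \<omega> D 0 = []"
| "choices a \<omega> D (Suc n) =
     (let h = choices a \<omega> D n in h @ [compare a \<omega> h D])"

definition S :: "'w \<Rightarrow> 'd \<Rightarrow> ('w, 'd, 'x, 'z) bbalg_scheme \<Rightarrow> nat \<Rightarrow> 'w \<times> nat list" where
  "S \<omega> D a b = (\<omega>, choices a \<omega> D b)"

definition xhat :: "'w \<Rightarrow> 'd \<Rightarrow> ('w, 'd, 'x, 'z) bbalg_scheme \<Rightarrow> nat \<Rightarrow> 'x" where
  "xhat \<omega> D a b = recommend a \<omega> b (choices a \<omega> D b)"

definition Nout :: "'d set \<Rightarrow> 'w \<Rightarrow> ('w, 'd, 'x, 'z) bbalg_scheme \<Rightarrow> nat \<Rightarrow> nat" where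
  "Nout \<D> \<omega> a b = card {S \<omega> D a b | D. D \<in> \<D>}"

text \<open>Bet-and-run of A 1, ..., A k with seed split \<omega>^i = split \<omega> i and budget b:
  each A i runs with seed split \<omega> i and budget b div k; the winner is the index whose
  recommendation has minimal empirical loss Lhat D (ties broken by least index).\<close>
definition bar_winner ::
  "('d \<Rightarrow> 'x \<Rightarrow> real) \<Rightarrow> (nat \<Rightarrow> ('w, 'd, 'x, 'z) bbalg_scheme) \<Rightarrow> nat \<Rightarrow>
   ('w \<Rightarrow> nat \<Rightarrow> 'w) \<Rightarrow> 'w \<Rightarrow> 'd \<Rightarrow> nat \<Rightarrow> nat" where
  "bar_winner Lhat A k split \<omega> D b =
     (LEAST i. i \<in> {1..k} \<and>
        (\<forall>j\<in>{1..k}. Lhat D (xhat (split \<omega> i) D (A i) (b div k))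
                      \<le> Lhat D (xhat (split \<omega> j) D (A j) (b div k))))"

definition bar_xhat ::
  "('d \<Rightarrow> 'x \<Rightarrow> real) \<Rightarrow> (nat \<Rightarrow> ('w, 'd, 'x, 'z) bbalg_scheme) \<Rightarrow> nat \<Rightarrow>
   ('w \<Rightarrow> nat \<Rightarrow> 'w) \<Rightarrow> 'w \<Rightarrow> 'd \<Rightarrow> nat \<Rightarrow> 'x" where
  "bar_xhat Lhat A k split \<omega> D b =
     (let i = bar_winner Lhat A k split \<omega> D b in xhat (split \<omega> i) D (A i) (b div k))"

text \<open>Internal state of bet-and-run determining its output: its seed, the index of
  the winning run, and the state of that run.\<close>
definition bar_S ::
  "('d \<Rightarrow> 'x \<Rightarrow> real) \<Rightarrow> (nat \<Rightarrow> ('w, 'd, 'x, 'z) bbalg_scheme) \<Rightarrow> nat \<Rightarrow>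
   ('w \<Rightarrow> nat \<Rightarrow> 'w) \<Rightarrow> 'w \<Rightarrow> 'd \<Rightarrow> nat \<Rightarrow> 'w \<times> nat \<times> ('w \<times> nat list)" where
  "bar_S Lhat A k split \<omega> D b =
     (let i = bar_winner Lhat A k split \<omega> D b in (\<omega>, i, S (split \<omega> i) D (A i) (b div k)))"

definition bar_N ::
  "'d set \<Rightarrow> ('d \<Rightarrow> 'x \<Rightarrow> real) \<Rightarrow> (nat \<Rightarrow> ('w, 'd, 'x, 'z) bbalg_scheme) \<Rightarrow> nat \<Rightarrow>
   ('w \<Rightarrow> nat \<Rightarrow> 'w) \<Rightarrow> 'w \<Rightarrow> nat \<Rightarrow> nat" where
  "bar_N \<D> Lhat A k split \<omega> b = card {bar_S Lhat A k split \<omega> D b | D. D \<in> \<D>}"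

end

theory Submission
  imports Defs
begin

text \<open>Grouping the possible states by the winner, the i-th group injects into the
  possible states of run i, whence the sum bound.  Well-formedness makes each run have
  only finitely many states; this matters because \<open>card\<close> of an infinite set is 0.\<close>

lemma finite_range_choices:
  assumes "wf_alg a"
  shows "finite (range (\<lambda>D. choices a \<omega> D n))"
proof (induction n)
  case 0
  show ?case by simp
next
  case (Suc n)
  let ?H = "range (\<lambda>D. choices a \<omega> D n)"
  have "range (\<lambda>D. choices a \<omega> D (Suc n))
        \<subseteq> (\<lambda>(h, c). h @ [c]) ` Sigma ?H (\<lambda>h. {1..nout a \<omega> h})"
    using assms by (auto simp: wf_alg_def Let_def)
  moreover have "finite (Sigma ?H (\<lambda>h. {1..nout a \<omega> h}))"
    using Suc by blast
  ultimately show ?case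
    by (meson finite_imageI finite_subset)
qed

lemma finite_S_image:
  assumes "wf_alg a"
  shows "finite ((\<lambda>D. S \<omega> D a n) ` X)"
proof -
  have "(\<lambda>D. S \<omega> D a n) ` X \<subseteq> Pair \<omega> ` range (\<lambda>D. choices a \<omega> D n)"
    unfolding S_def by blast
  then show ?thesis
    using finite_range_choices[OF assms] by (meson finite_imageI finite_subset)
qed

lemma Least_minimizer_in:
  fixes f :: "nat \<Rightarrow> 'b :: linorder"
  assumes "finite I" "I \<noteq> {}"
  shows "(LEAST i. i \<in> I \<and> (\<forall>j\<in>I. f i \<le> f j)) \<in> I"
proof -
  let ?m = "arg_min_on f I"
  have "?m \<in> I \<and> (\<forall>j\<in>I. f ?m \<le> f j)"
    using arg_min_if_finite(1)[OF assms] arg_min_least[OF assms] by blast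
  then show ?thesis
    by (rule LeastI2) blast
qed

lemma bar_winner_in_range:
  assumes "k \<ge> 1"
  shows "bar_winner Lhat A k split \<omega> D b \<in> {1..k}"
  unfolding bar_winner_def using assms by (intro Least_minimizer_in) auto

lemma card_image_tagged_le_sum:
  assumes "finite I"
    and "\<And>x. x \<in> X \<Longrightarrow> sel x \<in> I"
    and "\<And>i. i \<in> I \<Longrightarrow> finite (f i ` X)"
  shows "card ((\<lambda>x. (sel x, f (sel x) x)) ` X) \<le> (\<Sum>i\<in>I. card (f i ` X))"
proof -
  have cover: "(\<lambda>x. (sel x, f (sel x) x)) ` X \<subseteq> (\<Union>i\<in>I. Pair i ` f i ` X)"
    using assms(2) by blast
  have "card ((\<lambda>x. (sel x, f (sel x) x)) ` X) \<le> card (\<Union>i\<in>I. Pair i ` f i ` X)"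
    using cover assms(1,3) by (intro card_mono) auto
  also have "\<dots> \<le> (\<Sum>i\<in>I. card (Pair i ` f i ` X))"
    by (rule card_UN_le[OF assms(1)])
  also have "\<dots> = (\<Sum>i\<in>I. card (f i ` X))"
    by (intro sum.cong refl card_image) (simp add: inj_on_def)
  finally show ?thesis .
qed

theorem theorem4:
  fixes \<D> :: "'d set"
    and Lhat :: "'d \<Rightarrow> 'x \<Rightarrow> real"
    and A :: "nat \<Rightarrow> ('w, 'd, 'x) bbalg"
    and k b :: nat
    and split :: "'w \<Rightarrow> nat \<Rightarrow> 'w"
    and \<omega> :: 'w
  assumes "k \<ge> 1"
    and "k dvd b"
    and "\<forall>i\<in>{1..k}. wf_alg (A i)"
  shows "bar_N \<D> Lhat A k split \<omega> b \<le> (\<Sum>i=1..k. Nout \<D> (split \<omega> i) (A i) (b div k))"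
proof -
  let ?win = "\<lambda>D. bar_winner Lhat A k split \<omega> D b"
  let ?run = "\<lambda>i D. S (split \<omega> i) D (A i) (b div k)"
  have "bar_N \<D> Lhat A k split \<omega> b = card (Pair \<omega> ` (\<lambda>D. (?win D, ?run (?win D) D)) ` \<D>)"
    unfolding bar_N_def bar_S_def Let_def Setcompr_eq_image image_image ..
  also have "\<dots> = card ((\<lambda>D. (?win D, ?run (?win D) D)) ` \<D>)"
    by (intro card_image) (simp add: inj_on_def)
  also have "\<dots> \<le> (\<Sum>i=1..k. card (?run i ` \<D>))"
  proof (rule card_image_tagged_le_sum)
    show "\<And>D. D \<in> \<D> \<Longrightarrow> ?win D \<in> {1..k}"
      using bar_winner_in_range[OF assms(1)] .
    show "finite (?run i ` \<D>)" if "i \<in> {1..k}" for i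
      using assms(3) that by (intro finite_S_image) blast
  qed simp
  also have "\<dots> = (\<Sum>i=1..k. Nout \<D> (split \<omega> i) (A i) (b div k))"
    unfolding Nout_def Setcompr_eq_image ..
  finally show ?thesis .
qed

end
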